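(* There exists a constant $C'>0$ such that $|\varrho_N(x)|<1/x^2$ for all sufficiently large positive integers $N$ and all $x\in\left[N,\exp\!\left(C'(\log N)^2\right)\right]$.
   Context: For a positive integer $N$ and real $x$, $\varrho_N(x):=\prod_{n=1}^N\cos(\pi x/n)$. *)

theory Defs
  imports Complex_Main
begin

definition rho :: "nat \<Rightarrow> real \<Rightarrow> real" where
  "rho N x = (\<Prod>n=1..N. cos (pi * x / real n))"

end

theory Submission
  imports Defs "HOL-Real_Asymp.Real_Asymp"
begin

(* Let k be least with 4 k! x <= N^(k+1); then k <= ln N / 50 + 1 for x <= exp((ln N)^2/100).
   Up to sign, the k-th difference of m |-> x/m at n is x k!/(n (n+1) ... (n+k)), and this lies
   in [1/4, 1/2] for all n in an interval of length about sqrt N / (4(k+1)) inside [1, N].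
   A k-th difference of numbers within d of integers is within 2^k d of an integer, so every
   window n, ..., n+k of that interval contains some m with x/m at distance > 2^-(k+3) from the
   integers, where |cos(pi x/m)| <= 1 - 4^-(k+3). Thus at least sqrt N / (4(k+1)^2) - 1 factors
   of rho N x are that small, and |rho N x| <= exp(-N^(1/2 - o(1))) < 1/x^2. *)

fun fdiff :: "nat \<Rightarrow> (nat \<Rightarrow> real) \<Rightarrow> nat \<Rightarrow> real" where
  "fdiff 0 f n = f n"
| "fdiff (Suc k) f n = fdiff k f n - fdiff k f (Suc n)"

lemma fdiff_divide_of_nat:
  assumes "1 \<le> n"
  shows "fdiff k (\<lambda>m. x / real m) n = x * fact k / pochhammer (real n) (Suc k)"
  using assms
proof (induction k arbitrary: n)
  case 0
  then show ?case by simp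
next
  case (Suc k)
  define P where "P = pochhammer (real n + 1) k"
  have "P > 0" unfolding P_def by (simp add: pochhammer_pos)
  have p1: "pochhammer (real n) (Suc k) = real n * P"
    unfolding P_def by (simp add: pochhammer_rec)
  have p2: "pochhammer (real (Suc n)) (Suc k) = P * (real n + 1 + real k)"
    unfolding P_def using pochhammer_Suc[of "real n + 1" k] by (simp add: add.commute)
  have p3: "pochhammer (real n) (Suc (Suc k)) = real n * P * (real n + 1 + real k)"
    using pochhammer_Suc[of "real n" "Suc k"] p1 by (simp add: add.commute add.left_commute)
  have "fdiff (Suc k) (\<lambda>m. x / real m) n
      = x * fact k / (real n * P) - x * fact k / (P * (real n + 1 + real k))"
    using Suc by (simp add: p1 p2 del: of_nat_Suc)
  also have "\<dots> = x * fact k * (real n + 1 + real k - real n) / (real n * P * (real n + 1 + real k))"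
  proof -
    have "a / (u * P) - a / (P * v) = a * (v - u) / (u * P * v)" if "u > 0" "v > 0" for a u v :: real
      using that \<open>P > 0\<close> by (simp add: field_simps)
    then show ?thesis using Suc.prems by simp
  qed
  finally show ?case by (simp add: p3 mult_ac)
qed

lemma fdiff_close_to_int:
  fixes d :: real
  assumes "\<And>j. j \<le> k \<Longrightarrow> \<exists>z::int. \<bar>f (n + j) - z\<bar> \<le> d"
  shows "\<exists>z::int. \<bar>fdiff k f n - z\<bar> \<le> 2 ^ k * d"
  using assms
proof (induction k arbitrary: n)
  case 0
  then show ?case by simp
next
  case (Suc k)
  obtain z1 :: int where "\<bar>fdiff k f n - z1\<bar> \<le> 2 ^ k * d"
    using Suc.IH[of n] Suc.prems by auto
  moreover obtain z2 :: int where "\<bar>fdiff k f (Suc n) - z2\<bar> \<le> 2 ^ k * d"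
    using Suc.IH[of "Suc n"] Suc.prems[of "Suc _"] by auto
  ultimately have "\<bar>fdiff (Suc k) f n - of_int (z1 - z2)\<bar> \<le> 2 ^ Suc k * d"
    by (simp add: abs_le_iff)
  then show ?case by blast
qed

lemma cos_pi_nonneg:
  fixes d :: real
  assumes "0 \<le> d" "d \<le> 1/2"
  shows "0 \<le> cos (pi * d)"
proof (rule cos_ge_zero)
  have "0 \<le> pi * d" "pi * d \<le> pi / 2"
    using assms by (auto simp: field_simps)
  then show "- (pi / 2) \<le> pi * d" "pi * d \<le> pi / 2"
    by linarith+
qed

lemma abs_cos_pi_le_if_far_from_ints:
  fixes t d :: real
  assumes "\<And>z::int. d < \<bar>t - z\<bar>" "0 \<le> d"
  shows "\<bar>cos (pi * t)\<bar> \<le> cos (pi * d)"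
proof -
  define e where "e = t - round t"
  have e_le: "\<bar>e\<bar> \<le> 1/2"
    unfolding e_def using of_int_round_abs_le[of t] by (simp add: abs_minus_commute)
  have cos_nonneg: "0 \<le> cos (pi * \<bar>e\<bar>)"
    using e_le by (intro cos_pi_nonneg) auto
  have "cos (pi * t) = cos (pi * round t + pi * e)"
    unfolding e_def by (simp add: algebra_simps)
  also have "\<dots> = (if even (round t) then 1 else - 1) * cos (pi * \<bar>e\<bar>)"
    by (simp add: cos_add abs_mult cos_abs_real[of "pi * e", symmetric])
  finally have "\<bar>cos (pi * t)\<bar> = cos (pi * \<bar>e\<bar>)"
    using cos_nonneg by simp
  also have "\<dots> \<le> cos (pi * d)"
    using assms(1)[of "round t"] assms(2) e_le unfolding e_def
    by (intro cos_monotone_0_pi_le) auto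
  finally show ?thesis .
qed

lemma cos_le_quartic:
  fixes y :: real
  shows "cos y \<le> 1 - y\<^sup>2 / 2 + y ^ 4 / 24"
proof -
  obtain t where t: "cos y = (\<Sum>m<4. cos_coeff m * y ^ m) + cos (t + 1/2 * real 4 * pi) / fact 4 * y ^ 4"
    using Maclaurin_cos_expansion[of y 4] by blast
  have "cos_coeff 0 = 1" "cos_coeff (Suc 0) = 0" "cos_coeff 2 = -1/2" "cos_coeff 3 = 0"
    by (simp_all add: cos_coeff_def fact_numeral)
  then have "(\<Sum>m<4. cos_coeff m * y ^ m) = 1 - y\<^sup>2 / 2"
    by (simp add: numeral_eq_Suc lessThan_Suc)
  moreover have "cos (t + 1/2 * real 4 * pi) / fact 4 * y ^ 4 \<le> y ^ 4 / 24"
    using mult_right_mono[of "cos t" 1 "y ^ 4"] by (simp add: fact_numeral zero_le_even_power)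
  ultimately show ?thesis using t by simp
qed

lemma cos_pi_le_one_minus_square:
  assumes "0 \<le> d" "d \<le> 1/2"
  shows "cos (pi * d) \<le> 1 - d\<^sup>2"
proof -
  define y where "y = pi * d"
  have "0 \<le> y" "y \<le> 2"
    unfolding y_def using assms pi_less_4 by (auto intro: order_trans[OF mult_mono, of _ 4 _ "1/2"])
  then have "y\<^sup>2 * y\<^sup>2 \<le> 4 * y\<^sup>2"
    using power_mono[of y 2 2] by (intro mult_right_mono) auto
  then have "y ^ 4 \<le> 4 * y\<^sup>2"
    by (simp flip: power_add)
  moreover have "4 * d\<^sup>2 \<le> y\<^sup>2"
    unfolding y_def using pi_ge_two assms power_mono[OF pi_ge_two, of 2]
    by (simp add: power_mult_distrib mult_right_mono)
  ultimately show ?thesis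
    using cos_le_quartic[of y] zero_le_power2[of d] unfolding y_def by linarith
qed

lemma pochhammer_ge_power:
  fixes a :: real
  assumes "0 \<le> a"
  shows "a ^ n \<le> pochhammer a n"
proof -
  have "a ^ n = (\<Prod>i<n. a)"
    by simp
  also have "\<dots> \<le> (\<Prod>i<n. a + real i)"
    using assms by (intro prod_mono) auto
  also have "\<dots> = pochhammer a n"
    by (simp add: pochhammer_prod atLeast0LessThan)
  finally show ?thesis .
qed

lemma pochhammer_Suc_le_power:
  fixes a :: real
  assumes "0 \<le> a"
  shows "pochhammer a (Suc k) \<le> (a + real k) ^ Suc k"
proof -
  have "pochhammer a (Suc k) = (\<Prod>i<Suc k. a + real i)"
    by (simp add: pochhammer_prod atLeast0LessThan)
  also have "\<dots> \<le> (\<Prod>i<Suc k. a + real k)"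
    using assms by (intro prod_mono) auto
  finally show ?thesis by simp
qed

lemma root_two_ge:
  assumes "0 < n"
  shows "1 + 1 / (2 * real n) \<le> root n 2"
proof -
  have "(1 + 1 / (2 * real n)) ^ n \<le> exp (1 / (2 * real n)) ^ n"
    by (intro power_mono) (auto simp: add.commute exp_ge_add_one_self)
  also have "\<dots> = exp (1/2)"
    using assms by (simp flip: exp_of_nat_mult)
  also have "\<dots> \<le> 2"
  proof (rule power2_le_imp_le)
    show "exp (1/2) ^ 2 \<le> (2::real) ^ 2"
      using exp_le by (simp flip: exp_of_nat_mult)
  qed simp
  also have "\<dots> = root n 2 ^ n"
    using assms by simp
  finally have "(1 + 1 / (2 * real n)) ^ n \<le> root n 2 ^ n" .
  then show ?thesis
    using assms by (subst (asm) power_mono_iff) auto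
qed

lemma card_atLeastAtMost_le_if_windows_meet:
  assumes "finite S" "\<And>n. n \<in> {A..B} \<Longrightarrow> \<exists>j\<le>k. n + j \<in> S"
  shows "card {A..B} \<le> card S * Suc k"
proof -
  have "{A..B} \<subseteq> (\<Union>m\<in>S. {m - k..m})"
  proof
    fix n assume "n \<in> {A..B}"
    then obtain j where "j \<le> k" "n + j \<in> S"
      using assms(2) by blast
    then show "n \<in> (\<Union>m\<in>S. {m - k..m})"
      by (intro UN_I[of "n + j"]) auto
  qed
  then have "card {A..B} \<le> card (\<Union>m\<in>S. {m - k..m})"
    using assms(1) by (intro card_mono) auto
  also have "\<dots> \<le> (\<Sum>m\<in>S. card {m - k..m})"
    by (rule card_UN_le[OF assms(1)])
  also have "\<dots> \<le> (\<Sum>m\<in>S. Suc k)"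
    by (intro sum_mono) auto
  finally show ?thesis by simp
qed

definition far_indices :: "nat \<Rightarrow> real \<Rightarrow> real \<Rightarrow> nat set" where
  "far_indices N x d = {m \<in> {1..N}. \<forall>z::int. d < \<bar>x / real m - z\<bar>}"

lemma finite_far_indices [simp]: "finite (far_indices N x d)"
  unfolding far_indices_def by simp

lemma abs_rho_le_power_card_far_indices:
  assumes "0 \<le> d"
  shows "\<bar>rho N x\<bar> \<le> cos (pi * d) ^ card (far_indices N x d)"
proof -
  have "\<bar>rho N x\<bar> = (\<Prod>n=1..N. \<bar>cos (pi * (x / real n))\<bar>)"
    unfolding rho_def by (simp add: abs_prod)
  also have "\<dots> \<le> (\<Prod>n=1..N. if n \<in> far_indices N x d then cos (pi * d) else 1)"
  proof (intro prod_mono conjI)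
    fix n assume "n \<in> {1..N}"
    then show "\<bar>cos (pi * (x / real n))\<bar> \<le> (if n \<in> far_indices N x d then cos (pi * d) else 1)"
      using abs_cos_pi_le_if_far_from_ints[OF _ assms, of "x / real n"] by (auto simp: far_indices_def)
  qed simp
  also have "\<dots> = cos (pi * d) ^ card ({1..N} \<inter> far_indices N x d)"
    by (simp add: prod.If_cases)
  also have "{1..N} \<inter> far_indices N x d = far_indices N x d"
    by (auto simp: far_indices_def)
  finally show ?thesis .
qed

lemma window_meets_far_indices:
  assumes "1 \<le> n" "n + k \<le> N"
    and "1/4 \<le> x * fact k / pochhammer (real n) (Suc k)"
    and "x * fact k / pochhammer (real n) (Suc k) \<le> 1/2"
  shows "\<exists>j\<le>k. n + j \<in> far_indices N x (1 / 2 ^ (k + 3))"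
proof (rule ccontr)
  define D where "D = x * fact k / pochhammer (real n) (Suc k)"
  assume "\<not> ?thesis"
  then have close: "\<exists>z::int. \<bar>x / real (n + j) - z\<bar> \<le> 1 / 2 ^ (k + 3)" if "j \<le> k" for j
    using that assms(1,2) by (auto simp: far_indices_def not_less)
  obtain z :: int where "\<bar>fdiff k (\<lambda>m. x / real m) n - z\<bar> \<le> 2 ^ k * (1 / 2 ^ (k + 3))"
    using fdiff_close_to_int[of k "\<lambda>m. x / real m" n, OF close] by blast
  then have "\<bar>D - z\<bar> \<le> 1/8"
    using fdiff_divide_of_nat[OF assms(1)] unfolding D_def by (simp add: power_add)
  moreover have "real_of_int z \<le> 0 \<or> 1 \<le> real_of_int z"
    by (cases "z \<le> 0") auto
  ultimately show False
    using assms(3,4) unfolding D_def[symmetric] abs_le_iff by linarith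
qed

lemma div_pochhammer_between_quarter_half:
  fixes a b c :: real
  assumes "0 < a" "a \<le> real n" "real n + real k \<le> b"
    and "2 * c \<le> a ^ Suc k" "b ^ Suc k \<le> 4 * c"
  shows "1/4 \<le> c / pochhammer (real n) (Suc k)" "c / pochhammer (real n) (Suc k) \<le> 1/2"
proof -
  have poch_pos: "0 < pochhammer (real n) (Suc k)"
    using assms(1,2) by (simp add: pochhammer_pos)
  have "pochhammer (real n) (Suc k) \<le> (real n + real k) ^ Suc k"
    by (rule pochhammer_Suc_le_power) simp
  also have "\<dots> \<le> b ^ Suc k"
    using assms(3) by (intro power_mono) auto
  finally show "1/4 \<le> c / pochhammer (real n) (Suc k)"
    using assms(5) poch_pos by (simp add: field_simps)
  have "a ^ Suc k \<le> real n ^ Suc k"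
    using assms(1,2) by (intro power_mono) auto
  also have "\<dots> \<le> pochhammer (real n) (Suc k)"
    by (rule pochhammer_ge_power) simp
  finally show "c / pochhammer (real n) (Suc k) \<le> 1/2"
    using assms(4) poch_pos by (simp add: field_simps)
qed

lemma card_far_indices_ge_interval:
  assumes "0 < a" "b \<le> real N"
    and "2 * (x * fact k) \<le> a ^ Suc k" "b ^ Suc k \<le> 4 * (x * fact k)"
  shows "b - a - real k - 1 \<le> real (card (far_indices N x (1 / 2 ^ (k + 3))) * Suc k)"
proof -
  define A where "A = nat \<lceil>a\<rceil>"
  define B where "B = nat \<lfloor>b\<rfloor> - k"
  have "\<exists>j\<le>k. n + j \<in> far_indices N x (1 / 2 ^ (k + 3))" if "n \<in> {A..B}" for n
  proof -
    have "a \<le> real n" "real n + real k \<le> b"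
      using that \<open>0 < a\<close> unfolding A_def B_def by (auto, linarith)
    then show ?thesis
      using assms div_pochhammer_between_quarter_half[of a n k b "x * fact k"]
      by (intro window_meets_far_indices) auto
  qed
  then have "card {A..B} \<le> card (far_indices N x (1 / 2 ^ (k + 3))) * Suc k"
    by (intro card_atLeastAtMost_le_if_windows_meet) auto
  moreover have "b - a - real k - 1 \<le> real (card {A..B})"
  proof -
    have "real A \<le> a + 1" "b - real k - 1 \<le> real B"
      unfolding A_def B_def using \<open>0 < a\<close> by linarith+
    then show ?thesis
      by simp
  qed
  ultimately show ?thesis
    by linarith
qed

lemma obtain_least_order:
  assumes "0 < x" "real N \<le> x" "4 * fact K * x \<le> real N ^ Suc K"
  obtains k where "0 < k" "k \<le> K" "4 * fact k * x \<le> real N ^ Suc k" "real N ^ k < 4 * fact k * x"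
proof -
  define P where "P k \<longleftrightarrow> 4 * fact k * x \<le> real N ^ Suc k" for k
  define k where "k = (LEAST k. P k)"
  have "P k" "k \<le> K"
    using assms(3) unfolding k_def P_def by (auto intro: LeastI Least_le)
  moreover have "0 < k"
    using \<open>P k\<close> assms(1,2) unfolding P_def by (cases k) auto
  moreover have "real N ^ k < 4 * fact k * x"
  proof -
    have "\<not> P (k - 1)"
      using \<open>0 < k\<close> unfolding k_def by (intro not_less_Least) simp
    then have "real N ^ k < 4 * fact (k - 1) * x"
      using \<open>0 < k\<close> unfolding P_def by simp
    also have "\<dots> \<le> 4 * fact k * x"
      using assms(1) by (simp add: fact_mono)
    finally show ?thesis .
  qed
  ultimately show ?thesis
    using that unfolding P_def by blast
qed

lemma sqrt_half_le_root:
  assumes "0 < k" "1 \<le> N" "0 \<le> c" "real N ^ k \<le> 2 * c"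
  shows "sqrt (real N) / 2 \<le> root (Suc k) c"
proof -
  define s where "s = sqrt (real N)"
  have "1 \<le> s"
    unfolding s_def using assms(2) by simp
  have "(s / 2) ^ Suc k = s ^ Suc k / 2 ^ Suc k"
    by (rule power_divide)
  also have "\<dots> \<le> s ^ Suc k / 2"
    using \<open>1 \<le> s\<close> power_increasing[of 1 "Suc k" "2::real"]
    by (intro divide_left_mono) (auto simp del: power_Suc)
  also have "\<dots> \<le> s ^ (2 * k) / 2"
    using \<open>1 \<le> s\<close> assms(1) by (intro divide_right_mono power_increasing) auto
  also have "\<dots> = real N ^ k / 2"
    unfolding s_def by (simp add: power_mult)
  also have "\<dots> \<le> root (Suc k) c ^ Suc k"
    using assms(3,4) by (simp del: power_Suc)
  finally show ?thesis
    unfolding s_def by (rule power_le_imp_le_base) (use assms(3) in simp)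
qed

lemma root_double_diff_ge:
  assumes "0 \<le> c"
  shows "root (Suc k) c / (2 * real (Suc k)) \<le> root (Suc k) (2 * c) - root (Suc k) c"
proof -
  have "root (Suc k) c * (1 / (2 * real (Suc k))) \<le> root (Suc k) c * (root (Suc k) 2 - 1)"
    using root_two_ge[of "Suc k"] assms by (intro mult_left_mono) auto
  also have "\<dots> = root (Suc k) (2 * c) - root (Suc k) c"
    by (simp add: real_root_mult algebra_simps)
  finally show ?thesis
    by simp
qed

lemma card_far_indices_ge_sqrt:
  assumes "0 < x" "0 < k" "4 * fact k * x \<le> real N ^ Suc k" "real N ^ k < 4 * fact k * x"
  shows "sqrt (real N) / (4 * (real (Suc k))\<^sup>2) - 1 \<le> real (card (far_indices N x (1 / 2 ^ (k + 3))))"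
proof -
  define s where "s = sqrt (real N)"
  define a where "a = root (Suc k) (2 * fact k * x)"
  define b where "b = root (Suc k) (4 * fact k * x)"
  have "0 < a"
    unfolding a_def using assms(1) by simp
  have a_pow: "a ^ Suc k = 2 * fact k * x" and b_pow: "b ^ Suc k = 4 * fact k * x"
    unfolding a_def b_def using assms(1) by (simp_all del: power_Suc)
  have "b ^ Suc k \<le> real N ^ Suc k"
    using b_pow assms(3) by simp
  then have "b \<le> real N"
    by (rule power_le_imp_le_base) simp
  have "0 < 4 * fact k * x"
    using assms(1) by simp
  then have "1 \<le> N"
    using assms(3) by (cases N) auto
  then have "s / 2 \<le> a"
    unfolding s_def a_def using assms(1,2,4) by (intro sqrt_half_le_root) auto
  moreover have "a / (2 * real (Suc k)) \<le> b - a"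
    unfolding a_def b_def using root_double_diff_ge[of "2 * fact k * x" k] assms(1)
    by (simp add: mult.assoc)
  ultimately have "s / (4 * real (Suc k)) \<le> b - a"
    by (simp add: field_simps)
  moreover have "b - a - real k - 1 \<le> real (card (far_indices N x (1 / 2 ^ (k + 3))) * Suc k)"
    using \<open>0 < a\<close> \<open>b \<le> real N\<close> a_pow b_pow by (intro card_far_indices_ge_interval) simp_all
  ultimately have "s / (4 * real (Suc k)) - real (Suc k)
      \<le> real (card (far_indices N x (1 / 2 ^ (k + 3)))) * real (Suc k)"
    by (simp add: algebra_simps)
  then have "(s / (4 * real (Suc k)) - real (Suc k)) / real (Suc k)
      \<le> real (card (far_indices N x (1 / 2 ^ (k + 3))))"
    by (simp add: pos_divide_le_eq)
  moreover have "(s / (4 * t) - t) / t = s / (4 * t\<^sup>2) - 1" if "0 < t" for t :: real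
    using that by (simp add: field_simps power2_eq_square)
  ultimately show ?thesis
    unfolding s_def by (metis of_nat_0_less_iff zero_less_Suc)
qed

lemma abs_rho_le_exp:
  assumes "0 < x" "0 < k" "4 * fact k * x \<le> real N ^ Suc k" "real N ^ k < 4 * fact k * x"
  shows "\<bar>rho N x\<bar> \<le> exp (- ((sqrt (real N) / (4 * (real (Suc k))\<^sup>2) - 1) / 4 ^ (k + 3)))"
proof -
  define d :: real where "d = 1 / 2 ^ (k + 3)"
  define m where "m = card (far_indices N x d)"
  have "0 \<le> d" "d \<le> 1/8"
    unfolding d_def by (simp_all add: power_add)
  then have "d \<le> 1/2"
    by simp
  have "((2::real) ^ (k + 3))\<^sup>2 = (2\<^sup>2) ^ (k + 3)"
    by (simp only: power_mult[symmetric] mult.commute)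
  then have d_sq: "d\<^sup>2 = 1 / 4 ^ (k + 3)"
    unfolding d_def by (simp add: power_divide)
  have "\<bar>rho N x\<bar> \<le> cos (pi * d) ^ m"
    unfolding m_def using \<open>0 \<le> d\<close> by (rule abs_rho_le_power_card_far_indices)
  also have "\<dots> \<le> exp (- d\<^sup>2) ^ m"
  proof (rule power_mono)
    have "cos (pi * d) \<le> 1 - d\<^sup>2"
      using \<open>0 \<le> d\<close> \<open>d \<le> 1/2\<close> by (rule cos_pi_le_one_minus_square)
    then show "cos (pi * d) \<le> exp (- d\<^sup>2)"
      using exp_ge_add_one_self[of "- d\<^sup>2"] by linarith
    show "0 \<le> cos (pi * d)"
      using \<open>0 \<le> d\<close> \<open>d \<le> 1/2\<close> by (rule cos_pi_nonneg)
  qed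
  also have "\<dots> = exp (- d\<^sup>2 * real m)"
    by (simp add: mult.commute flip: exp_of_nat_mult)
  also have "\<dots> \<le> exp (- d\<^sup>2 * (sqrt (real N) / (4 * (real (Suc k))\<^sup>2) - 1))"
    using card_far_indices_ge_sqrt[OF assms] unfolding m_def d_def by simp
  finally show ?thesis
    by (simp add: d_sq)
qed

lemma four_fact_mult_le_power:
  assumes "4 \<le> real N" "real K \<le> sqrt (real N)" "0 < x" "x \<le> sqrt (real N) ^ K"
  shows "4 * fact K * x \<le> real N ^ Suc K"
proof -
  have "fact K \<le> sqrt (real N) ^ K"
    using fact_le_power[of K, where 'a=real] power_mono[OF assms(2), of K] by simp
  then have "4 * fact K * x \<le> real N * sqrt (real N) ^ K * sqrt (real N) ^ K"
    using assms by (intro mult_mono) auto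
  also have "\<dots> = real N ^ Suc K"
    by (simp add: power_mult_distrib[symmetric])
  finally show ?thesis .
qed

lemma four_power_le_powr:
  assumes "0 < N" "real k \<le> ln (real N) / 50 + 1"
  shows "4 ^ (k + 3) \<le> 256 * real N powr (1/25)"
proof -
  have "ln (4::real) \<le> 2"
    using ln_2_less_1 ln_realpow[of 2 2] by simp
  have "(4::real) ^ k = exp (real k * ln 4)"
    by (simp add: exp_of_nat_mult)
  also have "\<dots> \<le> exp ((ln (real N) / 50 + 1) * ln 4)"
    using assms(2) by simp
  also have "\<dots> = 4 * exp (ln (real N) / 50 * ln 4)"
    by (simp add: distrib_right exp_add)
  also have "\<dots> \<le> 4 * exp (ln (real N) / 25)"
    using assms(1) \<open>ln 4 \<le> 2\<close> by (auto intro: mult_left_mono)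
  also have "\<dots> = 4 * real N powr (1/25)"
    using assms(1) by (simp add: powr_def)
  finally show ?thesis
    by (simp add: power_add)
qed

lemma obtain_order_le_log:
  fixes N :: nat and x :: real
  defines "L \<equiv> ln (real N)"
  assumes "4 \<le> real N" "L / 50 + 1 \<le> sqrt (real N)" "real N \<le> x" "x \<le> exp (1/100 * L\<^sup>2)"
  obtains k where "0 < k" "real k \<le> L / 50 + 1"
    "4 * fact k * x \<le> real N ^ Suc k" "real N ^ k < 4 * fact k * x"
proof -
  define K where "K = nat \<lceil>L / 50\<rceil>"
  have "0 < x" "0 < L"
    using assms(2,4) ln_gt_zero[of "real N"] unfolding L_def by simp_all
  then have K_ge: "L / 50 \<le> real K" and K_le: "real K \<le> L / 50 + 1"
    unfolding K_def by linarith+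
  have "1/100 * L\<^sup>2 \<le> real K * (L / 2)"
    using mult_right_mono[OF K_ge, of "L / 2"] \<open>0 < L\<close> by (simp add: power2_eq_square)
  then have "x \<le> exp (real K * (L / 2))"
    using assms(5) by (meson exp_le_cancel_iff order.trans)
  also have "\<dots> = sqrt (real N) ^ K"
    using assms(2) by (simp add: L_def powr_half_sqrt[symmetric] powr_def flip: exp_of_nat_mult)
  finally have "4 * fact K * x \<le> real N ^ Suc K"
    using assms(2,3) K_le \<open>0 < x\<close> by (intro four_fact_mult_le_power) auto
  then obtain k where "0 < k" "k \<le> K" "4 * fact k * x \<le> real N ^ Suc k" "real N ^ k < 4 * fact k * x"
    using obtain_least_order \<open>0 < x\<close> assms(4) by blast
  with K_le show ?thesis
    using that by (meson of_nat_le_iff order.trans)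
qed

lemma abs_rho_lt_inverse_square:
  fixes N :: nat and x :: real
  defines "L \<equiv> ln (real N)"
  assumes "4 \<le> real N" "L / 50 + 1 \<le> sqrt (real N)"
    and "L\<^sup>2 / 50 < (sqrt (real N) / (4 * (L / 50 + 2)\<^sup>2) - 1) / (256 * real N powr (1/25))"
    and "real N \<le> x" "x \<le> exp (1/100 * L\<^sup>2)"
  shows "\<bar>rho N x\<bar> < 1 / x\<^sup>2"
proof -
  obtain k where k: "0 < k" "real k \<le> L / 50 + 1"
    "4 * fact k * x \<le> real N ^ Suc k" "real N ^ k < 4 * fact k * x"
    using obtain_order_le_log assms(2,3,5,6) unfolding L_def by blast
  have "0 < x"
    using assms(2,5) by simp
  have "0 < (sqrt (real N) / (4 * (L / 50 + 2)\<^sup>2) - 1) / (256 * real N powr (1/25))"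
    using assms(4) zero_le_power2[of L] by linarith
  then have numerator_pos: "0 < sqrt (real N) / (4 * (L / 50 + 2)\<^sup>2) - 1"
    by (simp add: zero_less_divide_iff)
  have "ln x \<le> 1/100 * L\<^sup>2"
    using ln_mono[OF assms(6) \<open>0 < x\<close>] by simp
  then have "2 * ln x < (sqrt (real N) / (4 * (L / 50 + 2)\<^sup>2) - 1) / (256 * real N powr (1/25))"
    using assms(4) by linarith
  also have "\<dots> \<le> (sqrt (real N) / (4 * (real (Suc k))\<^sup>2) - 1) / 4 ^ (k + 3)"
  proof (rule frac_le)
    have "real (Suc k) \<le> L / 50 + 2"
      using k(2) by simp
    then show "sqrt (real N) / (4 * (L / 50 + 2)\<^sup>2) - 1 \<le> sqrt (real N) / (4 * (real (Suc k))\<^sup>2) - 1"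
      by (intro diff_right_mono divide_left_mono mult_left_mono power_mono) auto
    then show "0 \<le> sqrt (real N) / (4 * (real (Suc k))\<^sup>2) - 1"
      using numerator_pos by linarith
    show "4 ^ (k + 3) \<le> 256 * real N powr (1/25)"
      using k(2) assms(2) unfolding L_def by (intro four_power_le_powr) auto
  qed simp
  finally have "exp (- ((sqrt (real N) / (4 * (real (Suc k))\<^sup>2) - 1) / 4 ^ (k + 3))) < exp (- (2 * ln x))"
    by simp
  also have "\<dots> = 1 / x\<^sup>2"
    using exp_of_nat_mult[of 2 "ln x"] \<open>0 < x\<close> by (simp add: exp_minus inverse_eq_divide)
  finally show ?thesis
    using abs_rho_le_exp[OF \<open>0 < x\<close> k(1,3,4)] by linarith
qed

theorem proposition3p2:
  shows "\<exists>C'>0. \<forall>\<^sub>F N in sequentially.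
           \<forall>x::real. real N \<le> x \<and> x \<le> exp (C' * (ln (real N))^2) \<longrightarrow>
             \<bar>rho N x\<bar> < 1 / x^2"
proof (intro exI conjI)
  have "\<forall>\<^sub>F N in sequentially. 4 \<le> real N"
    by real_asymp
  moreover have "\<forall>\<^sub>F N in sequentially. ln (real N) / 50 + 1 \<le> sqrt (real N)"
    by real_asymp
  moreover have "\<forall>\<^sub>F N in sequentially. (ln (real N))\<^sup>2 / 50
      < (sqrt (real N) / (4 * (ln (real N) / 50 + 2)\<^sup>2) - 1) / (256 * real N powr (1/25))"
    by real_asymp
  ultimately show "\<forall>\<^sub>F N in sequentially.
           \<forall>x::real. real N \<le> x \<and> x \<le> exp (1/100 * (ln (real N))^2) \<longrightarrow>
             \<bar>rho N x\<bar> < 1 / x^2"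
  proof eventually_elim
    case (elim N)
    then show ?case
      using abs_rho_lt_inverse_square[of N] by blast
  qed
qed simp

end
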